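(* Every cubic graph of path-width at most 4 contains a subgraph isomorphic to one of the following: the triangle, $K_{2,3}$, the domino, the twin-house, or the claw-square.
   Context: All graphs are finite and simple; cubic means 3-regular. The domino is the $2\times 3$ grid graph (vertices $a_1,a_2,a_3,b_1,b_2,b_3$, edges $a_1a_2,a_2a_3,b_1b_2,b_2b_3,a_1b_1,a_2b_2,a_3b_3$). The twin-house is the graph on vertices $p_1,\dots,p_6$ with edges $p_1p_2,p_1p_5,p_2p_6,p_5p_3,p_5p_4,p_6p_3,p_6p_4$. The claw-square is the graph on vertices $a_1,a_2,a_3,a_4,b_1,b_2,b_3,c$ with edges $a_1a_2,a_2a_3,a_3a_4,a_4a_1$, $cb_1,cb_2,cb_3$, $b_1a_1,b_2a_2,b_3a_3$. *)

theory Defs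
  imports Main
begin

definition simple_graph :: "'a set \<Rightarrow> ('a \<Rightarrow> 'a \<Rightarrow> bool) \<Rightarrow> bool" where
  "simple_graph V E \<longleftrightarrow> finite V \<and> (\<forall>u v. E u v \<longrightarrow> u \<in> V \<and> v \<in> V)
     \<and> (\<forall>u v. E u v \<longrightarrow> E v u) \<and> (\<forall>u. \<not> E u u)"

definition cubic :: "'a set \<Rightarrow> ('a \<Rightarrow> 'a \<Rightarrow> bool) \<Rightarrow> bool" where
  "cubic V E \<longleftrightarrow> (\<forall>v\<in>V. card {u \<in> V. E v u} = 3)"

definition path_decomposition :: "'a set \<Rightarrow> ('a \<Rightarrow> 'a \<Rightarrow> bool) \<Rightarrow> 'a set list \<Rightarrow> bool" where
  "path_decomposition V E B \<longleftrightarrow>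
     (\<forall>X\<in>set B. X \<subseteq> V)
   \<and> (\<forall>v\<in>V. \<exists>X\<in>set B. v \<in> X)
   \<and> (\<forall>u v. E u v \<longrightarrow> (\<exists>X\<in>set B. u \<in> X \<and> v \<in> X))
   \<and> (\<forall>i j k. i \<le> j \<and> j \<le> k \<and> k < length B \<longrightarrow> B ! i \<inter> B ! k \<subseteq> B ! j)"

definition pathwidth :: "'a set \<Rightarrow> ('a \<Rightarrow> 'a \<Rightarrow> bool) \<Rightarrow> nat" where
  "pathwidth V E = (LEAST k. \<exists>B. path_decomposition V E B \<and> (\<forall>X\<in>set B. card X \<le> k + 1))"

definition has_subgraph_iso :: "'a set \<Rightarrow> ('a \<Rightarrow> 'a \<Rightarrow> bool) \<Rightarrow> 'b set \<Rightarrow> ('b \<Rightarrow> 'b \<Rightarrow> bool) \<Rightarrow> bool" where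
  "has_subgraph_iso V E HV HE \<longleftrightarrow>
     (\<exists>f. inj_on f HV \<and> f ` HV \<subseteq> V \<and> (\<forall>x\<in>HV. \<forall>y\<in>HV. HE x y \<longrightarrow> E (f x) (f y)))"

definition edges_of :: "(nat \<times> nat) list \<Rightarrow> nat \<Rightarrow> nat \<Rightarrow> bool" where
  "edges_of L x y \<longleftrightarrow> (x, y) \<in> set L \<or> (y, x) \<in> set L"

definition triangle_V :: "nat set" where "triangle_V = {0,1,2}"
definition triangle_E :: "nat \<Rightarrow> nat \<Rightarrow> bool" where
  "triangle_E = edges_of [(0,1),(1,2),(2,0)]"

definition K23_V :: "nat set" where "K23_V = {0,1,2,3,4}"
definition K23_E :: "nat \<Rightarrow> nat \<Rightarrow> bool" where
  "K23_E = edges_of [(0,2),(0,3),(0,4),(1,2),(1,3),(1,4)]"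

text \<open>Domino: a1,a2,a3 = 1,2,3; b1,b2,b3 = 4,5,6.\<close>
definition domino_V :: "nat set" where "domino_V = {1,2,3,4,5,6}"
definition domino_E :: "nat \<Rightarrow> nat \<Rightarrow> bool" where
  "domino_E = edges_of [(1,2),(2,3),(4,5),(5,6),(1,4),(2,5),(3,6)]"

text \<open>Twin-house: p1..p6 = 1..6.\<close>
definition twinhouse_V :: "nat set" where "twinhouse_V = {1,2,3,4,5,6}"
definition twinhouse_E :: "nat \<Rightarrow> nat \<Rightarrow> bool" where
  "twinhouse_E = edges_of [(1,2),(1,5),(2,6),(5,3),(5,4),(6,3),(6,4)]"

text \<open>Claw-square: a1..a4 = 1..4, b1,b2,b3 = 5,6,7, c = 8.\<close>
definition clawsquare_V :: "nat set" where "clawsquare_V = {1,2,3,4,5,6,7,8}"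
definition clawsquare_E :: "nat \<Rightarrow> nat \<Rightarrow> bool" where
  "clawsquare_E = edges_of [(1,2),(2,3),(3,4),(4,1),(8,5),(8,6),(8,7),(5,1),(6,2),(7,3)]"

end

theory Submission
  imports Defs
begin

text \<open>Order the vertices by the first bag containing them in a path decomposition of width at
  most 4. A vertex of a prefix with a neighbour outside the prefix lies in the first bag of the
  next vertex, together with that vertex; hence every prefix has at most 4 unsaturated vertices
  (vertices of degree less than 3 inside it), and each new vertex is adjacent to at most 3
  earlier vertices, all of them unsaturated. A search over such vertex-by-vertex extensions, up
  to isomorphism, shows that within the first nine vertices (or all of them, if there are fewer)
  each extension either violates the bound or contains one of the five graphs.\<close>

section \<open>Subgraph containment\<close>

lemma has_subgraph_iso_trans:
  assumes "has_subgraph_iso V E HV HE" and "has_subgraph_iso V' E' V E"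
  shows "has_subgraph_iso V' E' HV HE"
proof -
  obtain f where f: "inj_on f HV" "f ` HV \<subseteq> V" "\<forall>x\<in>HV. \<forall>y\<in>HV. HE x y \<longrightarrow> E (f x) (f y)"
    using assms(1) unfolding has_subgraph_iso_def by blast
  obtain g where g: "inj_on g V" "g ` V \<subseteq> V'" "\<forall>x\<in>V. \<forall>y\<in>V. E x y \<longrightarrow> E' (g x) (g y)"
    using assms(2) unfolding has_subgraph_iso_def by blast
  have "inj_on (g \<circ> f) HV"
    using f(1,2) g(1) by (simp add: comp_inj_on inj_on_subset)
  moreover have "(g \<circ> f) ` HV \<subseteq> V'"
    using f(2) g(2) by auto
  moreover have "\<forall>x\<in>HV. \<forall>y\<in>HV. HE x y \<longrightarrow> E' ((g \<circ> f) x) ((g \<circ> f) y)"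
    using f g by (simp add: image_subset_iff)
  ultimately show ?thesis
    unfolding has_subgraph_iso_def by blast
qed

lemma has_subgraph_iso_enumeration:
  assumes "distinct xs" and "set xs \<subseteq> V" and "m \<le> length xs"
  shows "has_subgraph_iso V E {..<m} (\<lambda>i j. E (xs ! i) (xs ! j))"
  unfolding has_subgraph_iso_def
proof (intro exI[of _ "(!) xs"] conjI)
  show "inj_on ((!) xs) {..<m}"
    using assms(1,3) by (auto intro: inj_on_nth)
  show "(!) xs ` {..<m} \<subseteq> V"
    using assms(2,3) by auto
qed auto

definition has_forbidden_subgraph :: "'a set \<Rightarrow> ('a \<Rightarrow> 'a \<Rightarrow> bool) \<Rightarrow> bool" where
  "has_forbidden_subgraph V E \<longleftrightarrow>
     has_subgraph_iso V E triangle_V triangle_E \<or> has_subgraph_iso V E K23_V K23_E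
   \<or> has_subgraph_iso V E domino_V domino_E \<or> has_subgraph_iso V E twinhouse_V twinhouse_E
   \<or> has_subgraph_iso V E clawsquare_V clawsquare_E"

lemma has_forbidden_subgraph_trans:
  "has_forbidden_subgraph V E \<Longrightarrow> has_subgraph_iso V' E' V E \<Longrightarrow> has_forbidden_subgraph V' E'"
  unfolding has_forbidden_subgraph_def using has_subgraph_iso_trans by blast

definition forbidden_graphs :: "(nat list \<times> (nat \<times> nat) list) list" where
  "forbidden_graphs =
    [([0,1,2], [(0,1),(1,2),(2,0)]),
     ([0,1,2,3,4], [(0,2),(0,3),(0,4),(1,2),(1,3),(1,4)]),
     ([1,2,3,4,5,6], [(1,2),(2,3),(4,5),(5,6),(1,4),(2,5),(3,6)]),
     ([1,2,3,4,5,6], [(1,2),(1,5),(2,6),(5,3),(5,4),(6,3),(6,4)]),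
     ([1,2,3,4,5,6,7,8], [(1,2),(2,3),(3,4),(4,1),(8,5),(8,6),(8,7),(5,1),(6,2),(7,3)])]"

lemma has_forbidden_subgraphI:
  assumes "(hv, he) \<in> set forbidden_graphs" and "has_subgraph_iso V E (set hv) (edges_of he)"
  shows "has_forbidden_subgraph V E"
  using assms
  by (auto simp: forbidden_graphs_def has_forbidden_subgraph_def triangle_V_def triangle_E_def
      K23_V_def K23_E_def domino_V_def domino_E_def twinhouse_V_def twinhouse_E_def
      clawsquare_V_def clawsquare_E_def)

definition list_embedding ::
    "nat list \<Rightarrow> nat list \<Rightarrow> (nat \<times> nat) list \<Rightarrow> (nat \<Rightarrow> nat \<Rightarrow> bool) \<Rightarrow> nat \<Rightarrow> bool" where
  "list_embedding f hv he R k \<longleftrightarrow> distinct (map ((!) f) hv) \<and> (\<forall>x\<in>set hv. f ! x < k)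
     \<and> (\<forall>x\<in>set hv. \<forall>y\<in>set hv. edges_of he x y \<longrightarrow> R (f ! x) (f ! y))"

lemma list_embedding_has_subgraph_iso:
  "list_embedding f hv he R k \<Longrightarrow> has_subgraph_iso {..<k} R (set hv) (edges_of he)"
  unfolding list_embedding_def has_subgraph_iso_def
  by (intro exI[of _ "(!) f"]) (auto simp: distinct_map)

section \<open>Vertex orderings from path decompositions\<close>

lemma path_decomposition_of_pathwidth:
  assumes "simple_graph V E" and "pathwidth V E \<le> w"
  obtains B where "path_decomposition V E B" and "\<forall>X\<in>set B. card X \<le> w + 1"
proof -
  have "path_decomposition V E [V]"
    using assms(1) unfolding path_decomposition_def simple_graph_def by auto
  then have "\<exists>B. path_decomposition V E B \<and> (\<forall>X\<in>set B. card X \<le> card V + 1)"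
    by auto
  then have "\<exists>B. path_decomposition V E B \<and> (\<forall>X\<in>set B. card X \<le> pathwidth V E + 1)"
    unfolding pathwidth_def by (rule LeastI)
  then show ?thesis
    using assms(2) that by fastforce
qed

definition first_bag :: "'a set list \<Rightarrow> 'a \<Rightarrow> nat" where
  "first_bag B v = (LEAST i. i < length B \<and> v \<in> B ! i)"

lemma first_bag:
  assumes "i < length B" and "v \<in> B ! i"
  shows "first_bag B v \<le> i" and "first_bag B v < length B" and "v \<in> B ! first_bag B v"
proof -
  show "first_bag B v \<le> i"
    unfolding first_bag_def using assms by (simp add: Least_le)
  have "first_bag B v < length B \<and> v \<in> B ! first_bag B v"
    unfolding first_bag_def by (rule LeastI[of _ i]) (use assms in simp)
  then show "first_bag B v < length B" and "v \<in> B ! first_bag B v"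
    by auto
qed

definition prefix_boundary :: "(nat \<Rightarrow> nat \<Rightarrow> bool) \<Rightarrow> nat \<Rightarrow> nat \<Rightarrow> nat set" where
  "prefix_boundary A n p = {i. i < p \<and> (\<exists>j. p \<le> j \<and> j < n \<and> A i j)}"

lemma prefix_boundary_in_first_bag:
  assumes pd: "path_decomposition V E B"
    and xs: "set xs = V" "sorted (map (first_bag B) xs)"
    and i: "i \<in> prefix_boundary (\<lambda>i j. E (xs ! i) (xs ! j)) (length xs) p"
  shows "xs ! i \<in> B ! first_bag B (xs ! p)"
proof -
  obtain j where ij: "i < p" "p \<le> j" "j < length xs" "E (xs ! i) (xs ! j)"
    using i unfolding prefix_boundary_def by blast
  obtain k where k: "k < length B" "xs ! i \<in> B ! k" "xs ! j \<in> B ! k"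
    using pd ij(4) unfolding path_decomposition_def by (metis in_set_conv_nth)
  have consecutive: "B ! a \<inter> B ! c \<subseteq> B ! b" if "a \<le> b" "b \<le> c" "c < length B" for a b c
    using pd that unfolding path_decomposition_def by blast
  have "first_bag B (xs ! i) \<le> first_bag B (xs ! p)"
    using sorted_nth_mono[OF xs(2), of i p] ij by simp
  moreover have "first_bag B (xs ! p) \<le> first_bag B (xs ! j)"
    using sorted_nth_mono[OF xs(2), of p j] ij by simp
  moreover have "first_bag B (xs ! j) \<le> k"
    using first_bag(1)[OF k(1,3)] .
  ultimately have "B ! first_bag B (xs ! i) \<inter> B ! k \<subseteq> B ! first_bag B (xs ! p)"
    using consecutive k(1) by (meson order.trans)
  then show ?thesis
    using first_bag(3)[OF k(1,2)] k(2) by blast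
qed

lemma card_prefix_boundary_le:
  assumes "finite V" and pd: "path_decomposition V E B" and bags: "\<forall>X\<in>set B. card X \<le> w + 1"
    and xs: "set xs = V" "distinct xs" "sorted (map (first_bag B) xs)"
  shows "card (prefix_boundary (\<lambda>i j. E (xs ! i) (xs ! j)) (length xs) p) \<le> w"
proof (cases "p < length xs")
  case True
  define D where "D = prefix_boundary (\<lambda>i j. E (xs ! i) (xs ! j)) (length xs) p"
  define X where "X = B ! first_bag B (xs ! p)"
  obtain k where k: "k < length B" "xs ! p \<in> B ! k"
    using pd True xs(1) unfolding path_decomposition_def by (metis in_set_conv_nth nth_mem)
  have X: "X \<in> set B" "xs ! p \<in> X"
    unfolding X_def using first_bag(2,3)[OF k] by simp_all
  have "(!) xs ` D \<subseteq> X - {xs ! p}"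
  proof
    fix v assume "v \<in> (!) xs ` D"
    then obtain i where "i \<in> D" "v = xs ! i" by blast
    moreover have "i < p"
      using \<open>i \<in> D\<close> unfolding D_def prefix_boundary_def by simp
    ultimately show "v \<in> X - {xs ! p}"
      using prefix_boundary_in_first_bag[OF pd xs(1,3)] True xs(2)
      unfolding D_def X_def by (auto simp: nth_eq_iff_index_eq)
  qed
  moreover have "inj_on ((!) xs) D"
    using True xs(2) by (intro inj_on_nth) (auto simp: D_def prefix_boundary_def)
  moreover have "finite X"
    using pd X(1) \<open>finite V\<close> unfolding path_decomposition_def by (meson finite_subset)
  ultimately have "card D \<le> card (X - {xs ! p})"
    by (metis card_image card_mono finite_Diff)
  also have "\<dots> \<le> w"
    using bags X by (simp add: card_Diff_singleton le_diff_conv)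
  finally show ?thesis
    unfolding D_def .
next
  case False
  then have "prefix_boundary (\<lambda>i j. E (xs ! i) (xs ! j)) (length xs) p = {}"
    unfolding prefix_boundary_def by auto
  then show ?thesis
    by simp
qed

text \<open>Degrees and unsaturated vertices of the subgraph induced by a prefix {..<p} are defined
  on lists, so that they can be evaluated on the graphs of the certificate table.\<close>

definition prefix_degree :: "(nat \<Rightarrow> nat \<Rightarrow> bool) \<Rightarrow> nat \<Rightarrow> nat \<Rightarrow> nat" where
  "prefix_degree A p i = length (filter (A i) [0..<p])"

definition unsaturated :: "(nat \<Rightarrow> nat \<Rightarrow> bool) \<Rightarrow> nat \<Rightarrow> nat list" where
  "unsaturated A p = filter (\<lambda>i. prefix_degree A p i < 3) [0..<p]"

lemma length_filter_upt: "length (filter P [0..<p]) = card {i. i < p \<and> P i}"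
  by (simp add: length_filter_conv_card cong: conj_cong)

lemma prefix_degree_eq_card: "prefix_degree A p i = card {j. j < p \<and> A i j}"
  unfolding prefix_degree_def by (rule length_filter_upt)

lemma length_unsaturated: "length (unsaturated A p) = card {i. i < p \<and> prefix_degree A p i < 3}"
  unfolding unsaturated_def by (rule length_filter_upt)

lemma prefix_degree_mono: "p \<le> q \<Longrightarrow> prefix_degree A p i \<le> prefix_degree A q i"
  unfolding prefix_degree_eq_card by (rule card_mono) auto

lemma prefix_degree_cong:
  "\<forall>j<p. A i j = R i j \<Longrightarrow> prefix_degree A p i = prefix_degree R p i"
  unfolding prefix_degree_def by (auto intro!: arg_cong[where f = length] filter_cong)

lemma unsaturated_cong:
  assumes "\<forall>i<p. \<forall>j<p. A i j = R i j"
  shows "unsaturated A p = unsaturated R p"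
  unfolding unsaturated_def
proof (rule filter_cong[OF refl])
  fix i assume "i \<in> set [0..<p]"
  then have "prefix_degree A p i = prefix_degree R p i"
    using assms by (intro prefix_degree_cong) simp
  then show "prefix_degree A p i < 3 \<longleftrightarrow> prefix_degree R p i < 3"
    by simp
qed

lemma length_unsaturated_le_prefix_boundary:
  assumes "p \<le> n" and "\<forall>i<p. 3 \<le> prefix_degree A n i"
  shows "length (unsaturated A p) \<le> card (prefix_boundary A n p)"
proof -
  have "i \<in> prefix_boundary A n p" if "i < p" "prefix_degree A p i < 3" for i
  proof (rule ccontr)
    assume "i \<notin> prefix_boundary A n p"
    then have "{j. j < n \<and> A i j} \<subseteq> {j. j < p \<and> A i j}"
      using that(1) unfolding prefix_boundary_def by auto
    then have "prefix_degree A n i \<le> prefix_degree A p i"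
      unfolding prefix_degree_eq_card by (rule card_mono[rotated]) simp
    then show False
      using assms(2) that by fastforce
  qed
  then show ?thesis
    unfolding length_unsaturated prefix_boundary_def by (intro card_mono) auto
qed

lemma prefix_degree_enumeration:
  assumes "set xs = V" and "distinct xs" and "i < length xs"
  shows "prefix_degree (\<lambda>i j. E (xs ! i) (xs ! j)) (length xs) i = card {u \<in> V. E (xs ! i) u}"
proof -
  have "(!) xs ` {j. j < length xs \<and> E (xs ! i) (xs ! j)} = {u \<in> V. E (xs ! i) u}"
  proof (intro equalityI subsetI)
    fix u assume "u \<in> (!) xs ` {j. j < length xs \<and> E (xs ! i) (xs ! j)}"
    then show "u \<in> {u \<in> V. E (xs ! i) u}"
      using assms(1) by auto
  next
    fix u assume u: "u \<in> {u \<in> V. E (xs ! i) u}"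
    then obtain j where "j < length xs" "u = xs ! j"
      using assms(1) by (metis in_set_conv_nth mem_Collect_eq)
    then show "u \<in> (!) xs ` {j. j < length xs \<and> E (xs ! i) (xs ! j)}"
      using u by blast
  qed
  moreover have "inj_on ((!) xs) {j. j < length xs \<and> E (xs ! i) (xs ! j)}"
    using assms(2) by (intro inj_on_nth) auto
  ultimately show ?thesis
    unfolding prefix_degree_eq_card by (simp flip: card_image)
qed

lemma card_Collect_bij_betw:
  assumes "bij_betw f {..<p} {..<p}"
  shows "card {x. x < p \<and> P (f x)} = card {x. x < p \<and> P x}"
proof -
  have "inj_on f {x. x < p \<and> P (f x)}"
    using assms unfolding bij_betw_def by (rule inj_on_subset[OF conjunct1]) auto
  then have "card {x. x < p \<and> P (f x)} = card (f ` {x. x < p \<and> P (f x)})"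
    by (rule card_image[symmetric])
  also have "f ` {x. x < p \<and> P (f x)} = {x. x < p \<and> P x}"
  proof (intro equalityI subsetI)
    fix y assume "y \<in> f ` {x. x < p \<and> P (f x)}"
    then show "y \<in> {x. x < p \<and> P x}"
      using assms by (auto dest: bij_betwE)
  next
    fix y assume y: "y \<in> {x. x < p \<and> P x}"
    then have "y \<in> f ` {..<p}"
      using bij_betw_imp_surj_on[OF assms] by simp
    then show "y \<in> f ` {x. x < p \<and> P (f x)}"
      using y by auto
  qed
  finally show ?thesis .
qed

lemma prefix_degree_permute:
  "bij_betw f {..<p} {..<p} \<Longrightarrow>
    prefix_degree (\<lambda>x y. A (f x) (f y)) p i = prefix_degree A p (f i)"
  unfolding prefix_degree_eq_card by (rule card_Collect_bij_betw)

lemma length_unsaturated_permute: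
  "bij_betw f {..<p} {..<p} \<Longrightarrow>
    length (unsaturated (\<lambda>x y. A (f x) (f y)) p) = length (unsaturated A p)"
  unfolding length_unsaturated prefix_degree_permute by (rule card_Collect_bij_betw)

section \<open>The search\<close>

text \<open>The first m vertices of a vertex ordering of a cubic graph, where m is the
  number of vertices capped at 9: every branch of the search closes within nine vertices.\<close>

definition cubic_window :: "(nat \<Rightarrow> nat \<Rightarrow> bool) \<Rightarrow> nat \<Rightarrow> bool" where
  "cubic_window A m \<longleftrightarrow> 0 < m \<and> (\<forall>i<m. \<forall>j<m. A i j = A j i) \<and> (\<forall>i<m. \<not> A i i)
     \<and> (\<forall>i<m. prefix_degree A m i \<le> 3) \<and> (m < 9 \<longrightarrow> (\<forall>i<m. prefix_degree A m i = 3))"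

definition forces_forbidden :: "nat \<Rightarrow> (nat \<Rightarrow> nat \<Rightarrow> bool) \<Rightarrow> bool" where
  "forces_forbidden k R \<longleftrightarrow> (\<forall>A m. k \<le> m \<longrightarrow> cubic_window A m
     \<longrightarrow> (\<forall>p. k \<le> p \<longrightarrow> p \<le> m \<longrightarrow> length (unsaturated A p) \<le> 4)
     \<longrightarrow> (\<forall>i<k. \<forall>j<k. A i j = R i j) \<longrightarrow> has_forbidden_subgraph {..<m} A)"

lemma cubic_window_permute:
  assumes "cubic_window A m" and f: "bij_betw f {..<m} {..<m}"
  shows "cubic_window (\<lambda>x y. A (f x) (f y)) m"
proof -
  have "f x < m" if "x < m" for x
    using f that by (auto dest: bij_betwE)
  then show ?thesis
    using assms(1) unfolding cubic_window_def prefix_degree_permute[OF f] by simp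
qed

lemma bij_betw_extend_id:
  assumes "bij_betw f A A" and "A \<subseteq> B"
  shows "bij_betw (\<lambda>x. if x \<in> A then f x else x) B B"
proof -
  have "bij_betw (\<lambda>x. if x \<in> A then f x else x) A A"
    using assms(1) by (rule bij_betw_cong[THEN iffD1, rotated]) simp
  moreover have "bij_betw (\<lambda>x. if x \<in> A then f x else x) (B - A) (B - A)"
    by (rule bij_betw_cong[THEN iffD1, OF _ bij_betw_id]) simp
  ultimately have "bij_betw (\<lambda>x. if x \<in> A then f x else x) (A \<union> (B - A)) (A \<union> (B - A))"
    by (rule bij_betw_combine) auto
  then show ?thesis
    using assms(2) by (simp add: Un_absorb1)
qed

lemma forces_forbidden_permute:
  assumes forces: "forces_forbidden k R" and \<sigma>: "bij_betw \<sigma> {..<k} {..<k}"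
    and R': "\<forall>i<k. \<forall>j<k. R' (\<sigma> i) (\<sigma> j) = R i j"
  shows "forces_forbidden k R'"
  unfolding forces_forbidden_def
proof (intro allI impI)
  fix A m
  assume km: "k \<le> m" and window: "cubic_window A m"
    and width: "\<forall>p. k \<le> p \<longrightarrow> p \<le> m \<longrightarrow> length (unsaturated A p) \<le> 4"
    and agree: "\<forall>i<k. \<forall>j<k. A i j = R' i j"
  define \<tau> where "\<tau> x = (if x \<in> {..<k} then \<sigma> x else x)" for x
  have \<tau>: "bij_betw \<tau> {..<p} {..<p}" if "k \<le> p" for p
    unfolding \<tau>_def using \<sigma> that by (intro bij_betw_extend_id) auto
  define A' where "A' x y = A (\<tau> x) (\<tau> y)" for x y
  have "cubic_window A' m"
    unfolding A'_def using cubic_window_permute[OF window \<tau>[OF km]] .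
  moreover have "\<forall>p. k \<le> p \<longrightarrow> p \<le> m \<longrightarrow> length (unsaturated A' p) \<le> 4"
    unfolding A'_def using width length_unsaturated_permute[OF \<tau>] by simp
  moreover have "\<forall>i<k. \<forall>j<k. A' i j = R i j"
    using agree R' \<sigma> unfolding A'_def \<tau>_def by (auto dest: bij_betwE)
  ultimately have "has_forbidden_subgraph {..<m} A'"
    using forces km unfolding forces_forbidden_def by blast
  moreover have "has_subgraph_iso {..<m} A {..<m} A'"
    unfolding has_subgraph_iso_def A'_def using \<tau>[OF km]
    by (intro exI[of _ \<tau>]) (auto simp: bij_betw_def)
  ultimately show "has_forbidden_subgraph {..<m} A"
    by (rule has_forbidden_subgraph_trans)
qed

definition attachments :: "(nat \<times> nat) list \<Rightarrow> nat \<Rightarrow> nat list list" where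
  "attachments es k = filter (\<lambda>s. length s \<le> 3) (subseqs (unsaturated (edges_of es) k))"

lemma edges_of_attach:
  "edges_of (es @ map (Pair k) s) i j \<longleftrightarrow>
    edges_of es i j \<or> (i = k \<and> j \<in> set s) \<or> (j = k \<and> i \<in> set s)"
  unfolding edges_of_def by auto

lemma cubic_window_longer_than_prefix:
  assumes "cubic_window A m" and "k \<le> m" and "k < 9"
    and "k = 0 \<or> unsaturated R k \<noteq> []" and "\<forall>i<k. \<forall>j<k. A i j = R i j"
  shows "k < m"
proof (rule ccontr)
  assume "\<not> k < m"
  then have "m = k"
    using assms(2) by simp
  then have "0 < k" and "\<forall>i<k. prefix_degree A k i = 3"
    using assms(1,3) unfolding cubic_window_def by auto
  then have "unsaturated A k = []"
    unfolding unsaturated_def by (simp add: filter_empty_conv)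
  then show False
    using assms(4) \<open>0 < k\<close> unsaturated_cong[OF assms(5)] by simp
qed

lemma attachment_of_next_vertex:
  assumes window: "cubic_window A m" and "k < m"
    and agree: "\<forall>i<k. \<forall>j<k. A i j = edges_of es i j"
  obtains s where "s \<in> set (attachments es k)" and "set s = {j. j < k \<and> A k j}"
proof -
  define T where "T = {j. j < k \<and> A k j}"
  have sym: "\<forall>i<m. \<forall>j<m. A i j = A j i" and deg: "\<forall>i<m. prefix_degree A m i \<le> 3"
    using window unfolding cubic_window_def by simp_all
  have "T \<subseteq> set (unsaturated A k)"
  proof
    fix j assume "j \<in> T"
    then have j: "j < k" "A j k"
      using sym \<open>k < m\<close> unfolding T_def by auto
    have "{j'. j' < k \<and> A j j'} \<subset> {j'. j' < m \<and> A j j'}"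
      using j \<open>k < m\<close> by auto
    then have "prefix_degree A k j < prefix_degree A m j"
      unfolding prefix_degree_eq_card by (rule psubset_card_mono[rotated]) simp
    moreover have "prefix_degree A m j \<le> 3"
      using deg j(1) \<open>k < m\<close> by simp
    ultimately show "j \<in> set (unsaturated A k)"
      using j(1) unfolding unsaturated_def by simp
  qed
  then have "T \<in> set ` set (subseqs (unsaturated (edges_of es) k))"
    unfolding unsaturated_cong[OF agree] by (rule subset_subseqs)
  then obtain s where s: "s \<in> set (subseqs (unsaturated (edges_of es) k))" "set s = T"
    by blast
  have "distinct s"
    using subseqs_distinctD[OF s(1)] unfolding unsaturated_def by simp
  then have "length s = card T"
    using s(2) distinct_card by fastforce
  also have "card T \<le> prefix_degree A m k"
    unfolding T_def prefix_degree_eq_card using \<open>k < m\<close> by (intro card_mono) auto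
  also have "\<dots> \<le> 3"
    using deg \<open>k < m\<close> by simp
  finally show ?thesis
    using that s unfolding attachments_def T_def by simp
qed

lemma agrees_with_attachment:
  assumes "\<forall>i<k. \<forall>j<k. A i j = edges_of es i j" and "\<forall>(a, b)\<in>set es. a < k \<and> b < k"
    and "set s = {j. j < k \<and> A k j}" and "\<forall>i<k. A i k = A k i" and "\<not> A k k"
  shows "\<forall>i<Suc k. \<forall>j<Suc k. A i j = edges_of (es @ map (Pair k) s) i j"
  using assms unfolding edges_of_attach by (auto simp: less_Suc_eq edges_of_def)

lemma forces_forbidden_extend:
  assumes "k < 9" and "k = 0 \<or> unsaturated (edges_of es) k \<noteq> []"
    and "\<forall>(a, b)\<in>set es. a < k \<and> b < k"
    and "\<forall>s\<in>set (attachments es k). forces_forbidden (Suc k) (edges_of (es @ map (Pair k) s))"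
  shows "forces_forbidden k (edges_of es)"
  unfolding forces_forbidden_def
proof (intro allI impI)
  fix A m
  assume km: "k \<le> m" and window: "cubic_window A m"
    and width: "\<forall>p. k \<le> p \<longrightarrow> p \<le> m \<longrightarrow> length (unsaturated A p) \<le> 4"
    and agree: "\<forall>i<k. \<forall>j<k. A i j = edges_of es i j"
  have "k < m"
    using cubic_window_longer_than_prefix[OF window km assms(1,2) agree] .
  then obtain s where s: "s \<in> set (attachments es k)" "set s = {j. j < k \<and> A k j}"
    using attachment_of_next_vertex[OF window _ agree] by blast
  have "\<forall>i<Suc k. \<forall>j<Suc k. A i j = edges_of (es @ map (Pair k) s) i j"
    using window \<open>k < m\<close>
    by (intro agrees_with_attachment[OF agree assms(3) s(2)]) (auto simp: cubic_window_def)
  moreover have "forces_forbidden (Suc k) (edges_of (es @ map (Pair k) s))"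
    using assms(4) s(1) by blast
  ultimately show "has_forbidden_subgraph {..<m} A"
    using \<open>k < m\<close> window width unfolding forces_forbidden_def by auto
qed

lemma forces_forbidden_too_wide:
  assumes "5 \<le> length (unsaturated R k)"
  shows "forces_forbidden k R"
  unfolding forces_forbidden_def
proof (intro allI impI)
  fix A m
  assume "k \<le> m" and width: "\<forall>p. k \<le> p \<longrightarrow> p \<le> m \<longrightarrow> length (unsaturated A p) \<le> 4"
    and agree: "\<forall>i<k. \<forall>j<k. A i j = R i j"
  then have "length (unsaturated A k) \<le> 4"
    by blast
  then show "has_forbidden_subgraph {..<m} A"
    using assms unfolding unsaturated_cong[OF agree] by simp
qed

lemma forces_forbidden_has_forbidden_subgraph:
  assumes "has_forbidden_subgraph {..<k} R"
  shows "forces_forbidden k R"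
  unfolding forces_forbidden_def
proof (intro allI impI)
  fix A m assume "k \<le> m" and agree: "\<forall>i<k. \<forall>j<k. A i j = R i j"
  then have "has_subgraph_iso {..<m} A {..<k} R"
    unfolding has_subgraph_iso_def by (intro exI[of _ id]) auto
  then show "has_forbidden_subgraph {..<m} A"
    using assms by (rule has_forbidden_subgraph_trans[rotated])
qed

lemma bij_betw_nth_sort_eq_upt:
  assumes "sort \<sigma> = [0..<k]"
  shows "bij_betw ((!) \<sigma>) {..<k} {..<k}"
proof (rule bij_betw_nth)
  have "distinct (sort \<sigma>)" and "length (sort \<sigma>) = k" and "set (sort \<sigma>) = {..<k}"
    unfolding assms by (simp_all add: atLeast0LessThan)
  then show "distinct \<sigma>" and "{..<k} = {..<length \<sigma>}" and "{..<k} = set \<sigma>"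
    by simp_all
qed

text \<open>A branch of the search is closed because the prefix has five unsaturated vertices, because
  it contains a forbidden graph (given by its index in forbidden_graphs and a vertex map),
  or because a permutation maps it onto a prefix that is closed elsewhere.\<close>

datatype certificate = Too_wide | Forbidden nat "nat list" | Isomorphic "(nat \<times> nat) list" "nat list"

fun check_certificate ::
    "nat \<Rightarrow> (nat \<times> nat) list \<Rightarrow> (nat \<times> (nat \<times> nat) list) list \<Rightarrow> certificate \<Rightarrow> bool" where
  "check_certificate k es known Too_wide \<longleftrightarrow> 5 \<le> length (unsaturated (edges_of es) k)"
| "check_certificate k es known (Forbidden h f) \<longleftrightarrow> h < length forbidden_graphs
     \<and> (case forbidden_graphs ! h of (hv, he) \<Rightarrow> list_embedding f hv he (edges_of es) k)"
| "check_certificate k es known (Isomorphic ke \<sigma>) \<longleftrightarrow> (k, ke) \<in> set known \<and> sort \<sigma> = [0..<k]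
     \<and> (\<forall>i\<in>set [0..<k]. \<forall>j\<in>set [0..<k]. edges_of es (\<sigma> ! i) (\<sigma> ! j) = edges_of ke i j)"

lemma check_certificate_sound:
  assumes "check_certificate k es known c"
    and "\<forall>(k', ke)\<in>set known. forces_forbidden k' (edges_of ke)"
  shows "forces_forbidden k (edges_of es)"
proof (cases c)
  case Too_wide
  then show ?thesis
    using assms(1) by (simp add: forces_forbidden_too_wide)
next
  case (Forbidden h f)
  obtain hv he where "forbidden_graphs ! h = (hv, he)"
    by fastforce
  then have "(hv, he) \<in> set forbidden_graphs" and "list_embedding f hv he (edges_of es) k"
    using assms(1) Forbidden by (auto dest: nth_mem)
  then show ?thesis
    by (intro forces_forbidden_has_forbidden_subgraph has_forbidden_subgraphI
        list_embedding_has_subgraph_iso)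
next
  case (Isomorphic ke \<sigma>)
  then have "forces_forbidden k (edges_of ke)" and "bij_betw ((!) \<sigma>) {..<k} {..<k}"
    and "\<forall>i<k. \<forall>j<k. edges_of es (\<sigma> ! i) (\<sigma> ! j) = edges_of ke i j"
    using assms by (auto simp: bij_betw_nth_sort_eq_upt)
  then show ?thesis
    by (rule forces_forbidden_permute)
qed

definition check_node ::
    "nat \<Rightarrow> (nat \<times> nat) list \<Rightarrow> (nat \<times> (nat \<times> nat) list) list \<Rightarrow> certificate list \<Rightarrow> bool" where
  "check_node k es known cs \<longleftrightarrow> k < 9 \<and> (k = 0 \<or> unsaturated (edges_of es) k \<noteq> [])
     \<and> (\<forall>(a, b)\<in>set es. a < k \<and> b < k)
     \<and> list_all2 (\<lambda>s c. check_certificate (Suc k) (es @ map (Pair k) s) known c)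
           (attachments es k) cs"

lemma check_node_sound:
  assumes "check_node k es known cs"
    and "\<forall>(k', ke)\<in>set known. forces_forbidden k' (edges_of ke)"
  shows "forces_forbidden k (edges_of es)"
proof (rule forces_forbidden_extend)
  show "k < 9" and "k = 0 \<or> unsaturated (edges_of es) k \<noteq> []"
    and "\<forall>(a, b)\<in>set es. a < k \<and> b < k"
    using assms(1) unfolding check_node_def by simp_all
  show "\<forall>s\<in>set (attachments es k). forces_forbidden (Suc k) (edges_of (es @ map (Pair k) s))"
  proof
    fix s assume "s \<in> set (attachments es k)"
    then obtain i where "i < length (attachments es k)" and "s = attachments es k ! i"
      by (metis in_set_conv_nth)
    then have "check_certificate (Suc k) (es @ map (Pair k) s) known (cs ! i)"
      using assms(1) list_all2_nthD unfolding check_node_def by fastforce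
    then show "forces_forbidden (Suc k) (edges_of (es @ map (Pair k) s))"
      using assms(2) by (rule check_certificate_sound)
  qed
qed

fun check_table :: "(nat \<times> (nat \<times> nat) list \<times> certificate list) list \<Rightarrow> bool" where
  "check_table [] \<longleftrightarrow> True"
| "check_table ((k, es, cs) # T) \<longleftrightarrow>
     check_node k es (map (\<lambda>(k, es, _). (k, es)) T) cs \<and> check_table T"

lemma check_table_sound:
  "check_table T \<Longrightarrow> \<forall>(k, es, _)\<in>set T. forces_forbidden k (edges_of es)"
proof (induction T rule: check_table.induct)
  case (2 k es cs T)
  then have "\<forall>(k', ke)\<in>set (map (\<lambda>(k, es, _). (k, es)) T). forces_forbidden k' (edges_of ke)"
    by fastforce
  moreover have "check_node k es (map (\<lambda>(k, es, _). (k, es)) T) cs"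
    using "2.prems" by simp
  ultimately have "forces_forbidden k (edges_of es)"
    by (rule check_node_sound[rotated])
  then show ?case
    using 2 by simp
qed simp

text \<open>The search tree, compressed by isomorphism: an entry (k, es, cs) is a graph on {..<k} with
  edge list es, together with one certificate for each attachment of the vertex k; isomorphism
  certificates refer to later entries.\<close>

definition certificate_table :: "(nat \<times> (nat \<times> nat) list \<times> certificate list) list" where
  "certificate_table =
    [(0, [],
       [Isomorphic [] [0]]),
     (1, [],
       [Isomorphic [(1,0)] [0,1], Isomorphic [] [0,1]]),
     (2, [],
       [Isomorphic [(1,0),(2,0)] [2,0,1], Isomorphic [(1,0)] [0,2,1], Isomorphic [(1,0)] [1,2,0],
        Isomorphic [] [0,1,2]]),
     (2, [(1,0)],
       [Forbidden 0 [0,1,2], Isomorphic [(1,0),(2,0)] [0,1,2], Isomorphic [(1,0),(2,0)] [1,0,2],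
        Isomorphic [(1,0)] [0,1,2]]),
     (3, [],
       [Isomorphic [(1,0),(2,0),(3,0)] [3,0,1,2], Isomorphic [(1,0),(2,0)] [3,0,1,2],
        Isomorphic [(1,0),(2,0)] [3,0,2,1], Isomorphic [(1,0)] [0,3,1,2],
        Isomorphic [(1,0),(2,0)] [3,1,2,0], Isomorphic [(1,0)] [1,3,0,2],
        Isomorphic [(1,0)] [2,3,0,1], Isomorphic [] [0,1,2,3]]),
     (3, [(1,0)],
       [Forbidden 0 [0,1,3], Forbidden 0 [0,1,3], Isomorphic [(1,0),(2,0),(3,1)] [0,3,1,2],
        Isomorphic [(1,0),(2,0)] [0,1,3,2], Isomorphic [(1,0),(2,0),(3,1)] [1,3,0,2],
        Isomorphic [(1,0),(2,0)] [1,0,3,2], Isomorphic [(1,0),(3,2)] [0,1,2,3],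
        Isomorphic [(1,0)] [0,1,2,3]]),
     (3, [(1,0),(2,0)],
       [Forbidden 0 [0,1,3], Forbidden 0 [0,1,3], Forbidden 0 [0,2,3],
        Isomorphic [(1,0),(2,0),(3,0)] [0,1,2,3], Isomorphic [(1,0),(2,0),(3,1),(3,2)] [0,1,2,3],
        Isomorphic [(1,0),(2,0),(3,1)] [0,1,2,3], Isomorphic [(1,0),(2,0),(3,1)] [0,2,1,3],
        Isomorphic [(1,0),(2,0)] [0,1,2,3]]),
     (4, [],
       [Isomorphic [(1,0),(2,0),(3,0)] [4,0,1,2,3], Isomorphic [(1,0),(2,0),(3,0)] [4,0,1,3,2],
        Too_wide, Isomorphic [(1,0),(2,0),(3,0)] [4,0,2,3,1], Too_wide, Too_wide, Too_wide,
        Isomorphic [(1,0),(2,0),(3,0)] [4,1,2,3,0], Too_wide, Too_wide, Too_wide, Too_wide, Too_wide,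
        Too_wide, Too_wide]),
     (4, [(1,0)],
       [Forbidden 0 [0,1,4], Forbidden 0 [0,1,4], Too_wide,
        Isomorphic [(1,0),(2,0),(3,0),(4,1)] [4,0,2,3,1], Too_wide, Too_wide, Too_wide,
        Isomorphic [(1,0),(2,0),(3,0),(4,1)] [4,1,2,3,0], Too_wide, Too_wide, Too_wide, Too_wide,
        Too_wide, Too_wide, Too_wide]),
     (4, [(1,0),(3,2)],
       [Forbidden 0 [0,1,4], Forbidden 0 [0,1,4], Too_wide, Forbidden 0 [2,3,4], Too_wide, Too_wide,
        Too_wide, Forbidden 0 [2,3,4], Too_wide, Too_wide, Too_wide, Too_wide, Too_wide, Too_wide,
        Too_wide]),
     (4, [(1,0),(2,0)],
       [Forbidden 0 [0,1,4], Forbidden 0 [0,1,4], Forbidden 0 [0,1,4], Forbidden 0 [0,2,4],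
        Forbidden 0 [0,2,4], Isomorphic [(1,0),(2,0),(3,0),(4,1)] [0,4,1,2,3],
        Isomorphic [(1,0),(2,0),(3,0)] [0,1,2,4,3],
        Isomorphic [(1,0),(2,0),(3,0),(4,1),(4,2)] [4,1,2,3,0], Too_wide, Too_wide, Too_wide,
        Too_wide, Too_wide, Too_wide, Too_wide]),
     (4, [(1,0),(2,0),(3,1)],
       [Forbidden 0 [0,1,4], Forbidden 0 [0,1,4], Forbidden 0 [0,1,4], Forbidden 0 [0,2,4],
        Forbidden 0 [0,2,4], Isomorphic [(1,0),(2,0),(3,0),(4,1),(4,2)] [0,1,4,2,3],
        Isomorphic [(1,0),(2,0),(3,0),(4,1)] [0,1,2,4,3], Forbidden 0 [1,3,4],
        Isomorphic [(1,0),(2,0),(3,0),(4,1),(4,2)] [1,0,4,3,2], Forbidden 0 [1,3,4],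
        Isomorphic [(1,0),(2,0),(3,0),(4,1)] [1,0,3,4,2], Too_wide, Too_wide, Too_wide, Too_wide]),
     (4, [(1,0),(2,0),(3,1),(3,2)],
       [Forbidden 0 [0,1,4], Forbidden 0 [0,1,4], Forbidden 0 [0,1,4], Forbidden 0 [0,2,4],
        Forbidden 0 [0,2,4], Forbidden 1 [0,3,1,2,4],
        Isomorphic [(1,0),(2,0),(3,0),(4,1),(4,2)] [0,1,2,4,3], Forbidden 0 [1,3,4],
        Forbidden 1 [1,2,0,3,4], Forbidden 0 [1,3,4],
        Isomorphic [(1,0),(2,0),(3,0),(4,1),(4,2)] [1,0,3,4,2], Forbidden 0 [2,3,4],
        Isomorphic [(1,0),(2,0),(3,0),(4,1),(4,2)] [2,0,3,4,1],
        Isomorphic [(1,0),(2,0),(3,0),(4,1),(4,2)] [3,1,2,4,0], Too_wide]),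
     (4, [(1,0),(2,0),(3,0)],
       [Forbidden 1 [0,4,1,2,3], Isomorphic [(1,0),(2,0),(3,0),(4,1),(4,2)] [0,1,2,3,4],
        Isomorphic [(1,0),(2,0),(3,0),(4,1),(4,2)] [0,1,3,2,4],
        Isomorphic [(1,0),(2,0),(3,0),(4,1)] [0,1,2,3,4],
        Isomorphic [(1,0),(2,0),(3,0),(4,1),(4,2)] [0,2,3,1,4],
        Isomorphic [(1,0),(2,0),(3,0),(4,1)] [0,2,1,3,4],
        Isomorphic [(1,0),(2,0),(3,0),(4,1)] [0,3,1,2,4], Isomorphic [(1,0),(2,0),(3,0)] [0,1,2,3,4]]),
     (5, [(1,0),(2,0),(3,0)],
       [Forbidden 1 [0,5,1,2,3], Isomorphic [(1,0),(2,0),(3,0),(4,1),(4,2),(5,4)] [0,1,2,3,5,4],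
        Too_wide, Isomorphic [(1,0),(2,0),(3,0),(4,1),(4,2),(5,4)] [0,1,3,2,5,4], Too_wide, Too_wide,
        Too_wide, Isomorphic [(1,0),(2,0),(3,0),(4,1),(4,2),(5,4)] [0,2,3,1,5,4], Too_wide, Too_wide,
        Too_wide, Too_wide, Too_wide, Too_wide, Too_wide]),
     (5, [(1,0),(2,0),(3,0),(4,1)],
       [Forbidden 1 [0,5,1,2,3], Forbidden 0 [1,4,5],
        Isomorphic [(1,0),(2,0),(3,0),(4,1),(4,2),(5,1)] [0,1,2,3,5,4], Forbidden 0 [1,4,5],
        Isomorphic [(1,0),(2,0),(3,0),(4,1),(4,2),(5,1)] [0,1,3,2,5,4], Forbidden 0 [1,4,5],
        Isomorphic [(1,0),(2,0),(3,0),(4,1),(5,1)] [0,1,2,3,4,5], Forbidden 3 [0,1,4,2,3,0,5],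
        Too_wide, Too_wide, Too_wide, Too_wide, Too_wide, Too_wide, Too_wide]),
     (5, [(1,0),(2,0),(3,0),(4,1),(4,2)],
       [Forbidden 1 [0,5,1,2,3], Forbidden 0 [1,4,5], Forbidden 1 [1,2,0,4,5], Forbidden 0 [1,4,5],
        Forbidden 2 [0,2,0,3,4,1,5], Forbidden 0 [1,4,5],
        Isomorphic [(1,0),(2,0),(3,0),(4,1),(4,2),(5,1)] [0,1,2,3,4,5], Forbidden 0 [2,4,5],
        Forbidden 2 [0,1,0,3,4,2,5], Forbidden 0 [2,4,5],
        Isomorphic [(1,0),(2,0),(3,0),(4,1),(4,2),(5,1)] [0,2,1,3,4,5], Forbidden 3 [0,3,5,1,2,0,4],
        Too_wide, Isomorphic [(1,0),(2,0),(3,0),(4,1),(4,2),(5,4)] [0,1,2,3,4,5], Too_wide]),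
     (6, [(1,0),(2,0),(3,0),(4,1),(5,1)],
       [Forbidden 3 [0,1,4,2,3,0,6], Forbidden 3 [0,1,5,2,3,0,6], Too_wide,
        Forbidden 3 [0,0,2,4,5,1,6], Too_wide, Too_wide, Too_wide, Forbidden 3 [0,0,3,4,5,1,6],
        Too_wide, Too_wide, Too_wide, Too_wide, Too_wide, Too_wide, Too_wide]),
     (6, [(1,0),(2,0),(3,0),(4,1),(4,2),(5,4)],
       [Forbidden 1 [0,6,1,2,3], Forbidden 1 [1,2,0,4,6], Forbidden 1 [1,2,0,4,6],
        Forbidden 2 [0,0,1,4,3,6,5], Forbidden 2 [0,2,0,3,4,1,6], Forbidden 2 [0,0,1,6,2,4,5],
        Isomorphic [(1,0),(2,0),(3,0),(4,1),(4,2),(5,1),(6,2)] [1,0,4,6,2,3,5],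
        Forbidden 2 [0,0,2,4,3,6,5], Forbidden 2 [0,1,0,3,4,2,6], Forbidden 2 [0,0,2,6,1,4,5],
        Isomorphic [(1,0),(2,0),(3,0),(4,1),(4,2),(5,1),(6,2)] [2,0,4,6,1,3,5], Too_wide, Too_wide,
        Too_wide, Too_wide]),
     (6, [(1,0),(2,0),(3,0),(4,1),(4,2),(5,1)],
       [Forbidden 0 [2,4,6], Forbidden 2 [0,1,0,3,4,2,6], Forbidden 2 [0,1,0,3,4,2,6],
        Forbidden 0 [2,4,6], Forbidden 0 [2,4,6], Forbidden 3 [0,5,6,0,4,1,2],
        Isomorphic [(1,0),(2,0),(3,0),(4,1),(4,2),(5,1),(6,2)] [0,1,2,3,4,5,6],
        Forbidden 2 [0,0,1,5,2,4,6], Forbidden 3 [0,3,6,1,2,0,4], Too_wide, Too_wide,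
        Forbidden 2 [0,0,1,5,2,4,6],
        Isomorphic [(1,0),(2,0),(3,0),(4,1),(4,2),(5,1),(6,2)] [1,0,4,5,2,3,6], Too_wide, Too_wide]),
     (7, [(1,0),(2,0),(3,0),(4,1),(4,2),(5,1),(6,2)],
       [Forbidden 2 [0,0,1,5,2,4,7], Forbidden 2 [0,0,2,6,1,4,7], Forbidden 3 [0,3,7,1,2,0,4],
        Forbidden 4 [0,1,0,2,4,5,3,6,7], Too_wide, Too_wide, Too_wide, Forbidden 2 [0,0,1,5,2,4,7],
        Forbidden 2 [0,0,1,5,2,4,7], Forbidden 2 [0,0,2,6,1,4,7],
        Isomorphic [(1,0),(2,0),(3,0),(4,1),(4,2),(5,1),(6,2),(7,4)] [0,1,2,3,4,5,6,7], Too_wide,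
        Too_wide, Too_wide, Too_wide]),
     (8, [(1,0),(2,0),(3,0),(4,1),(4,2),(5,1),(6,2),(7,4)],
       [Forbidden 4 [0,1,0,2,4,5,3,6,8], Forbidden 4 [0,0,1,4,2,3,5,7,8], Too_wide,
        Forbidden 4 [0,0,2,4,1,3,6,7,8], Too_wide, Too_wide, Too_wide,
        Forbidden 4 [0,1,4,2,0,5,7,6,8], Too_wide, Too_wide, Too_wide, Too_wide, Too_wide, Too_wide,
        Too_wide])]"

lemma forces_forbidden_empty: "forces_forbidden 0 (edges_of [])"
proof -
  have "check_table certificate_table"
    by code_simp
  then have "\<forall>(k, es, _)\<in>set certificate_table. forces_forbidden k (edges_of es)"
    by (rule check_table_sound)
  moreover have "(0, [], [Isomorphic [] [0]]) \<in> set certificate_table"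
    unfolding certificate_table_def by (rule list.set_intros(1))
  ultimately show ?thesis
    by fastforce
qed

lemma prefix_degree_cubic_enumeration:
  assumes "cubic V E" and "set xs = V" and "distinct xs" and "i < length xs"
  shows "prefix_degree (\<lambda>i j. E (xs ! i) (xs ! j)) (length xs) i = 3"
proof -
  have "xs ! i \<in> V"
    using assms(2,4) by auto
  then show ?thesis
    using prefix_degree_enumeration[OF assms(2-4)] assms(1) unfolding cubic_def by simp
qed

lemma cubic_window_enumeration:
  assumes "simple_graph V E" and "cubic V E" and "V \<noteq> {}" and "set xs = V" and "distinct xs"
  shows "cubic_window (\<lambda>i j. E (xs ! i) (xs ! j)) (min (length xs) 9)"
  unfolding cubic_window_def
proof (intro conjI allI impI)
  have "xs \<noteq> []"
    using assms(3,4) by auto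
  then show "0 < min (length xs) 9"
    by simp
  show "E (xs ! i) (xs ! j) = E (xs ! j) (xs ! i)" and "\<not> E (xs ! i) (xs ! i)" for i j
    using assms(1) unfolding simple_graph_def by blast+
  show "prefix_degree (\<lambda>i j. E (xs ! i) (xs ! j)) (min (length xs) 9) i \<le> 3"
    if "i < min (length xs) 9" for i
    using prefix_degree_mono[of "min (length xs) 9" "length xs"] that
      prefix_degree_cubic_enumeration[OF assms(2,4,5)] by (metis min.cobounded1 min.strict_boundedE)
  show "prefix_degree (\<lambda>i j. E (xs ! i) (xs ! j)) (min (length xs) 9) i = 3"
    if "min (length xs) 9 < 9" and "i < min (length xs) 9" for i
    using that prefix_degree_cubic_enumeration[OF assms(2,4,5)]
    by (simp add: min_def split: if_splits)
qed

lemma length_unsaturated_enumeration_le: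
  assumes "simple_graph V E" and "cubic V E"
    and "path_decomposition V E B" and "\<forall>X\<in>set B. card X \<le> w + 1"
    and "set xs = V" and "distinct xs" and "sorted (map (first_bag B) xs)" and "p \<le> length xs"
  shows "length (unsaturated (\<lambda>i j. E (xs ! i) (xs ! j)) p) \<le> w"
proof -
  have "length (unsaturated (\<lambda>i j. E (xs ! i) (xs ! j)) p)
      \<le> card (prefix_boundary (\<lambda>i j. E (xs ! i) (xs ! j)) (length xs) p)"
    using assms(8) prefix_degree_cubic_enumeration[OF assms(2,5,6)]
    by (intro length_unsaturated_le_prefix_boundary) simp_all
  also have "\<dots> \<le> w"
    using assms(1) unfolding simple_graph_def
    by (intro card_prefix_boundary_le[OF _ assms(3-7)]) simp
  finally show ?thesis .
qed

theorem lemma29: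
  fixes V :: "'a set" and E :: "'a \<Rightarrow> 'a \<Rightarrow> bool"
  assumes "simple_graph V E" and "V \<noteq> {}" and "cubic V E"
    and "pathwidth V E \<le> 4"
  shows "has_subgraph_iso V E triangle_V triangle_E
       \<or> has_subgraph_iso V E K23_V K23_E
       \<or> has_subgraph_iso V E domino_V domino_E
       \<or> has_subgraph_iso V E twinhouse_V twinhouse_E
       \<or> has_subgraph_iso V E clawsquare_V clawsquare_E"
proof -
  obtain B where B: "path_decomposition V E B" "\<forall>X\<in>set B. card X \<le> 4 + 1"
    using path_decomposition_of_pathwidth[OF assms(1,4)] .
  obtain ys where "set ys = V" and "distinct ys"
    using assms(1) finite_distinct_list unfolding simple_graph_def by blast
  define xs where "xs = sort_key (first_bag B) ys"
  have xs: "set xs = V" "distinct xs" "sorted (map (first_bag B) xs)"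
    unfolding xs_def using \<open>set ys = V\<close> \<open>distinct ys\<close> by simp_all
  define A where "A i j = E (xs ! i) (xs ! j)" for i j
  define m where "m = min (length xs) 9"
  have "cubic_window A m"
    unfolding A_def m_def using cubic_window_enumeration[OF assms(1,3,2) xs(1,2)] .
  moreover have "\<forall>p. 0 \<le> p \<longrightarrow> p \<le> m \<longrightarrow> length (unsaturated A p) \<le> 4"
    unfolding A_def m_def using length_unsaturated_enumeration_le[OF assms(1,3) B xs] by simp
  ultimately have "has_forbidden_subgraph {..<m} A"
    using forces_forbidden_empty unfolding forces_forbidden_def by blast
  moreover have "has_subgraph_iso V E {..<m} A"
    unfolding A_def m_def using xs(1,2) by (intro has_subgraph_iso_enumeration) simp_all
  ultimately show ?thesis
    using has_forbidden_subgraph_trans unfolding has_forbidden_subgraph_def by blast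
qed

end
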